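(* Let $V$ be a finite-dimensional real vector space with skew-symmetric bilinear forms $A$ and $B$, $B$ non-degenerate, such that the Jordan–Kronecker decomposition of $(V, A, B)$ consists only of real Jordan blocks with the same complex eigenvalue $\lambda = \alpha + i\beta$, $\beta \neq 0$. Let $J$ be the semisimple part of $\frac{P - \alpha E}{\beta}$, where $P = B^{-1}A$. Then every automorphism $Q \in \mathrm{Aut}(V, A, B)$ commutes with $J$: $QJ = JQ$. Consequently there is a natural one-to-one correspondence $\mathrm{Aut}(V, A, B) \cong \mathrm{Aut}(V^{\mathbb{C}}, A^{\mathbb{C}}, B^{\mathbb{C}})$. Moreover, a subspace $U \subset V$ is invariant (under $\mathrm{Aut}(V,A,B)$) if and only if $U$ is $J$-invariant and the corresponding complex subspace $U^{\mathbb{C}}$ of $(V^{\mathbb{C}}, A^{\mathbb{C}}, B^{\mathbb{C}})$ is invariant (under $\mathrm{Aut}(V^{\mathbb{C}}, A^{\mathbb{C}}, B^{\mathbb{C}})$).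
   Context: $P = B^{-1}A$ means $A(u,v) = B(Pu,v)$. $J$ satisfies $J^2 = -E$ and is self-adjoint with respect to $A$ and $B$. $V^{\mathbb{C}}$ denotes $V$ regarded as a complex vector space via the complex structure $J$ (i.e. $i \cdot v := Jv$), and $A^{\mathbb{C}}(u,v) = A(u,v) - iA(u,Jv)$, $B^{\mathbb{C}}(u,v) = B(u,v) - iB(u,Jv)$ are complex bilinear forms on it. For a $J$-invariant real subspace $U$, $U^{\mathbb{C}}$ is $U$ regarded as a complex subspace of $V^{\mathbb{C}}$. $\mathrm{Aut}(V,A,B)$ (resp. $\mathrm{Aut}(V^{\mathbb{C}}, A^{\mathbb{C}}, B^{\mathbb{C}})$) is the group of real (resp. complex) linear automorphisms preserving both forms; a subspace is invariant if it is preserved by the corresponding group. A real Jordan block with eigenvalue $\alpha + i\beta$ of size $k$ is a $4k$-dimensional summand with basis in which $B = \begin{pmatrix}0 & \mathrm{diag}(E_2,\dots,E_2)\\ -\mathrm{diag}(E_2,\dots,E_2) & 0\end{pmatrix}$ and $A = \begin{pmatrix}0 & \mathcal{J}\\ -\mathcal{J}^T & 0\end{pmatrix}$, where $\mathcal{J}$ is the $k\times k$ block upper-bidiagonal matrix with diagonal blocks $\Lambda = \begin{pmatrix}\alpha & -\beta\\ \beta & \alpha\end{pmatrix}$ and superdiagonal blocks $E_2$ (the $2\times 2$ identity). *)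

theory Defs
  imports "HOL-Analysis.Analysis" "HOL-Computational_Algebra.Polynomial"
begin

text \<open>Entries of the 2k x 2k block upper-bidiagonal matrix with diagonal
  blocks Lambda = [[alpha,-beta],[beta,alpha]] and superdiagonal blocks E2.\<close>
definition jk_J :: "real \<Rightarrow> real \<Rightarrow> nat \<Rightarrow> nat \<Rightarrow> real" where
  "jk_J \<alpha> \<beta> p q =
     (let a = p div 2; c = q div 2; r = p mod 2; s = q mod 2 in
      if a = c then
        (if r = 0 \<and> s = 0 then \<alpha> else if r = 0 \<and> s = 1 then - \<beta>
         else if r = 1 \<and> s = 0 then \<beta> else \<alpha>)
      else if c = a + 1 then (if r = s then 1 else 0)
      else 0)"

text \<open>Gram matrix of B on a real Jordan block of size k (dimension 4k):
  [[0, I_2k], [-I_2k, 0]].\<close>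
definition jblock_B :: "nat \<Rightarrow> nat \<Rightarrow> nat \<Rightarrow> real" where
  "jblock_B k i j =
     (let m = 2 * k in
      if i < m \<and> m \<le> j then (if j - m = i then 1 else 0)
      else if m \<le> i \<and> j < m then - (if i - m = j then 1 else 0)
      else 0)"

text \<open>Gram matrix of A on a real Jordan block of size k: [[0, JJ], [-JJ^T, 0]].\<close>
definition jblock_A :: "real \<Rightarrow> real \<Rightarrow> nat \<Rightarrow> nat \<Rightarrow> nat \<Rightarrow> real" where
  "jblock_A \<alpha> \<beta> k i j =
     (let m = 2 * k in
      if i < m \<and> m \<le> j then jk_J \<alpha> \<beta> i (j - m)
      else if m \<le> i \<and> j < m then - jk_J \<alpha> \<beta> j (i - m)
      else 0)"

fun blockdiag :: "(nat \<Rightarrow> nat \<Rightarrow> nat \<Rightarrow> real) \<Rightarrow> nat list \<Rightarrow> nat \<Rightarrow> nat \<Rightarrow> real" where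
  "blockdiag M [] i j = 0"
| "blockdiag M (k # ks) i j =
     (if i < 4 * k \<and> j < 4 * k then M k i j
      else if 4 * k \<le> i \<and> 4 * k \<le> j then blockdiag M ks (i - 4 * k) (j - 4 * k)
      else 0)"

text \<open>The Jordan--Kronecker decomposition of (V,A,B) consists only of real Jordan
  blocks with eigenvalue alpha + i beta: there is a basis e_0,...,e_{N-1} of V
  in which the Gram matrices of A and B are block-diagonal sums of such blocks.\<close>
definition only_real_jordan_blocks ::
  "('v::real_vector \<Rightarrow> 'v \<Rightarrow> real) \<Rightarrow> ('v \<Rightarrow> 'v \<Rightarrow> real) \<Rightarrow> real \<Rightarrow> real \<Rightarrow> bool" where
  "only_real_jordan_blocks A B \<alpha> \<beta> \<longleftrightarrow>
     (\<exists>ks (e :: nat \<Rightarrow> 'v).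
        (\<forall>k\<in>set ks. 0 < k) \<and>
        (let N = 4 * sum_list ks in
           inj_on e {..<N} \<and> independent (e ` {..<N}) \<and> span (e ` {..<N}) = UNIV \<and>
           (\<forall>i<N. \<forall>j<N. A (e i) (e j) = blockdiag (jblock_A \<alpha> \<beta>) ks i j \<and>
                         B (e i) (e j) = blockdiag jblock_B ks i j)))"

definition poly_op :: "real poly \<Rightarrow> ('v::real_vector \<Rightarrow> 'v) \<Rightarrow> 'v \<Rightarrow> 'v" where
  "poly_op p f x = (\<Sum>i\<le>degree p. coeff p i *\<^sub>R (f ^^ i) x)"

text \<open>A real linear operator is semisimple iff it is annihilated by a nonzero
  real polynomial all of whose complex roots are simple (i.e. it is
  diagonalizable over the complex numbers).\<close>
definition semisimple_op :: "('v::real_vector \<Rightarrow> 'v) \<Rightarrow> bool" where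
  "semisimple_op S \<longleftrightarrow>
     (\<exists>p :: real poly. p \<noteq> 0 \<and> (\<forall>x. poly_op p S x = 0) \<and>
        (\<forall>z :: complex. poly (map_poly of_real p) z = 0 \<longrightarrow>
                        poly (pderiv (map_poly of_real p)) z \<noteq> 0))"

definition nilpotent_op :: "('v::real_vector \<Rightarrow> 'v) \<Rightarrow> bool" where
  "nilpotent_op N \<longleftrightarrow> (\<exists>k. \<forall>x. (N ^^ k) x = 0)"

text \<open>S is the semisimple part of M: M = S + N with S semisimple, N nilpotent,
  both linear and commuting (this decomposition is unique).\<close>
definition is_semisimple_part :: "('v::real_vector \<Rightarrow> 'v) \<Rightarrow> ('v \<Rightarrow> 'v) \<Rightarrow> bool" where
  "is_semisimple_part S M \<longleftrightarrow>
     (\<exists>N. linear S \<and> linear N \<and> semisimple_op S \<and> nilpotent_op N \<and>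
          S \<circ> N = N \<circ> S \<and> (\<forall>x. M x = S x + N x))"

definition aut_real :: "('v::real_vector \<Rightarrow> 'v \<Rightarrow> real) \<Rightarrow> ('v \<Rightarrow> 'v \<Rightarrow> real) \<Rightarrow> ('v \<Rightarrow> 'v) set" where
  "aut_real A B = {Q. linear Q \<and> bij Q \<and>
     (\<forall>u v. A (Q u) (Q v) = A u v) \<and> (\<forall>u v. B (Q u) (Q v) = B u v)}"

text \<open>V regarded as a complex vector space via J: (a + ib) v = a v + b J v.\<close>
definition cscale :: "('v::real_vector \<Rightarrow> 'v) \<Rightarrow> complex \<Rightarrow> 'v \<Rightarrow> 'v" where
  "cscale J c v = Re c *\<^sub>R v + Im c *\<^sub>R J v"

definition complex_linear_J :: "('v::real_vector \<Rightarrow> 'v) \<Rightarrow> ('v \<Rightarrow> 'v) \<Rightarrow> bool" where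
  "complex_linear_J J Q \<longleftrightarrow>
     (\<forall>u v. Q (u + v) = Q u + Q v) \<and> (\<forall>c v. Q (cscale J c v) = cscale J c (Q v))"

definition cform :: "('v \<Rightarrow> 'v) \<Rightarrow> ('v \<Rightarrow> 'v \<Rightarrow> real) \<Rightarrow> 'v \<Rightarrow> 'v \<Rightarrow> complex" where
  "cform J F u v = Complex (F u v) (- F u (J v))"

definition aut_complex ::
  "('v::real_vector \<Rightarrow> 'v) \<Rightarrow> ('v \<Rightarrow> 'v \<Rightarrow> real) \<Rightarrow> ('v \<Rightarrow> 'v \<Rightarrow> real) \<Rightarrow> ('v \<Rightarrow> 'v) set" where
  "aut_complex J A B = {Q. complex_linear_J J Q \<and> bij Q \<and>
     (\<forall>u v. cform J A (Q u) (Q v) = cform J A u v) \<and>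
     (\<forall>u v. cform J B (Q u) (Q v) = cform J B u v)}"

definition invariant_under :: "('v \<Rightarrow> 'v) set \<Rightarrow> 'v set \<Rightarrow> bool" where
  "invariant_under G U \<longleftrightarrow> (\<forall>Q\<in>G. Q ` U \<subseteq> U)"

end

theory Submission
  imports Defs "HOL-Computational_Algebra.Polynomial_Factorial"
    "HOL-Computational_Algebra.Field_as_Ring"
begin

text \<open>Let \<open>M = (P - \<alpha>) / \<beta>\<close>. On a sum of real Jordan blocks there is an explicit complex
  structure \<open>J\<^sub>0\<close>, self-adjoint for \<open>A\<close> and \<open>B\<close> (hence commuting with \<open>P\<close>), with
  \<open>M - J\<^sub>0\<close> nilpotent; so \<open>M\<^sup>2 + 1\<close> is nilpotent. In a real algebra where
  \<open>(m\<^sup>2 + 1)\<^sup>k = 0\<close>, \<open>k\<close> steps of Newton's iteration \<open>s \<mapsto> s + (s\<^sup>2 + 1) s / 2\<close> from \<open>m\<close>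
  give a square root of \<open>-1\<close> in the bicommutant of \<open>m\<close>, and it is the only square root of
  \<open>-1\<close> that commutes with \<open>m\<close> and differs from \<open>m\<close> by a nilpotent. The semisimple part \<open>J\<close>
  of \<open>M\<close> is annihilated by a polynomial with simple roots while \<open>J\<^sup>2 + 1\<close> is nilpotent, so
  \<open>J\<^sup>2 = -1\<close>. Hence \<open>J = J\<^sub>0\<close>, and \<open>J\<close> commutes with everything that commutes with \<open>M\<close>,
  in particular with every automorphism; this makes the automorphisms complex linear.
  Finally, \<open>J\<^sub>0\<close> is an automorphism composed with an affine combination of the identity
  and another automorphism, so invariant subspaces are \<open>J\<close>-invariant.\<close>

section \<open>Nilpotents and square roots of \<open>-1\<close> in real algebras\<close>

lemma power_mult_commuting:
  fixes a b :: "'a::monoid_mult"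
  assumes "a * b = b * a"
  shows "(a * b) ^ n = a ^ n * b ^ n"
proof (induction n)
  case (Suc n)
  have "b * a ^ n = a ^ n * b"
    using power_commuting_commutes[OF assms] by metis
  then have "a * b * (a ^ n * b ^ n) = a * a ^ n * (b * b ^ n)"
    by (simp only: mult.assoc[symmetric]) (simp only: mult.assoc)
  with Suc show ?case
    by (simp only: power_Suc)
qed simp

lemma nilpotent_mult_commuting:
  fixes a b :: "'a::ring_1"
  assumes "a * b = b * a" and "a ^ n = 0"
  shows "(a * b) ^ n = 0"
  using assms by (simp add: power_mult_commuting)

lemma nilpotent_add_commuting:
  fixes a b :: "'a::ring_1"
  assumes ab: "a * b = b * a" and a: "a ^ m = 0" and b: "b ^ n = 0"
  shows "(a + b) ^ (m + n) = 0"
proof -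
  have "a ^ i * b ^ j * (a + b) ^ l = 0" if "m + n \<le> i + j + l" for i j l
    using that
  proof (induction l arbitrary: i j)
    case 0
    then consider "m \<le> i" | "n \<le> j" by linarith
    then show ?case
    proof cases
      case 1
      then show ?thesis
        using a by (metis le_add_diff_inverse mult_zero_left power_add)
    next
      case 2
      then show ?thesis
        using b by (metis le_add_diff_inverse mult_zero_left mult_zero_right power_add)
    qed
  next
    case (Suc l)
    have "b ^ j * a = a * b ^ j"
      using power_commuting_commutes[OF ab[symmetric]] by simp
    then have "a ^ i * b ^ j * (a + b) = a ^ Suc i * b ^ j + a ^ i * b ^ Suc j"
      by (simp only: distrib_left power_Suc2 mult.assoc)
    then have "a ^ i * b ^ j * (a + b) ^ Suc l
        = a ^ Suc i * b ^ j * (a + b) ^ l + a ^ i * b ^ Suc j * (a + b) ^ l"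
      by (metis distrib_right mult.assoc power_Suc)
    then show ?case
      using Suc.IH[of "Suc i" j] Suc.IH[of i "Suc j"] Suc.prems by simp
  qed
  from this[of 0 0 "m + n"] show ?thesis by simp
qed

lemma eq_0_if_eq_mult_nilpotent:
  fixes a y :: "'a::ring_1"
  assumes "a = a * y" and "y ^ n = 0"
  shows "a = 0"
proof -
  have "a = a * y ^ i" for i
    by (induction i) (use assms(1) in \<open>simp_all add: mult.assoc[symmetric] power_Suc2\<close>)
  from this[of n] show ?thesis using assms(2) by simp
qed

definition bicommutant :: "'a::ring_1 \<Rightarrow> 'a set" where
  "bicommutant m = {s. \<forall>x. x * m = m * x \<longrightarrow> x * s = s * x}"

lemma bicommutantI: "(\<And>x. x * m = m * x \<Longrightarrow> x * s = s * x) \<Longrightarrow> s \<in> bicommutant m"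
  by (simp add: bicommutant_def)

lemma bicommutantD: "s \<in> bicommutant m \<Longrightarrow> x * m = m * x \<Longrightarrow> x * s = s * x"
  by (simp add: bicommutant_def)

lemma bicommutant_self: "m \<in> bicommutant m"
  by (rule bicommutantI)

lemma bicommutant_commute:
  assumes "a \<in> bicommutant m" "b \<in> bicommutant m"
  shows "a * b = b * a"
  using assms by (metis bicommutantD)

lemma bicommutant_zero: "0 \<in> bicommutant m"
  by (rule bicommutantI) simp

lemma bicommutant_one: "1 \<in> bicommutant m"
  by (rule bicommutantI) simp

lemma bicommutant_add: "a \<in> bicommutant m \<Longrightarrow> b \<in> bicommutant m \<Longrightarrow> a + b \<in> bicommutant m"
  by (simp add: bicommutant_def distrib_left distrib_right)

lemma bicommutant_diff: "a \<in> bicommutant m \<Longrightarrow> b \<in> bicommutant m \<Longrightarrow> a - b \<in> bicommutant m"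
  by (simp add: bicommutant_def left_diff_distrib right_diff_distrib)

lemma bicommutant_mult: "a \<in> bicommutant m \<Longrightarrow> b \<in> bicommutant m \<Longrightarrow> a * b \<in> bicommutant m"
  by (intro bicommutantI) (metis bicommutantD mult.assoc)

lemma bicommutant_power: "a \<in> bicommutant m \<Longrightarrow> a ^ n \<in> bicommutant m"
  by (induction n) (simp_all add: bicommutant_one bicommutant_mult)

lemma bicommutant_scaleR:
  fixes m :: "'a::real_algebra_1"
  shows "a \<in> bicommutant m \<Longrightarrow> c *\<^sub>R a \<in> bicommutant m"
  by (auto intro!: bicommutantI dest: bicommutantD)

lemmas bicommutant_intros =
  bicommutant_self bicommutant_zero bicommutant_one bicommutant_add bicommutant_diff
  bicommutant_mult bicommutant_power bicommutant_scaleR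

lemma sqrt_minus_one_unique:
  fixes x s :: "'a::real_algebra_1"
  assumes x: "x * x = -1" and s: "s * s = -1" and xs: "x * s = s * x" and nil: "(x - s) ^ n = 0"
  shows "x = s"
proof -
  define d where "d = x - s"
  have dx: "d * x = x * d"
    unfolding d_def using xs by (simp add: algebra_simps)
  \<comment> \<open>\<open>(x - s) (x + s) = x\<^sup>2 - s\<^sup>2 = 0\<close> and \<open>x + s = 2 x - d\<close>, so \<open>d = d (- d x / 2)\<close>\<close>
  have "d * d = 2 *\<^sub>R (d * x)"
    unfolding d_def using x s xs by (simp add: algebra_simps scaleR_2)
  then have "d = d * (d * ((- 1 / 2) *\<^sub>R x))"
    using x by (simp add: mult.assoc[symmetric]) (simp add: mult.assoc)
  moreover have "(d * ((- 1 / 2) *\<^sub>R x)) ^ n = 0"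
    using nil dx by (intro nilpotent_mult_commuting) (simp_all add: d_def)
  ultimately have "d = 0"
    by (rule eq_0_if_eq_mult_nilpotent)
  then show ?thesis
    unfolding d_def by simp
qed

lemma sqrt_minus_one_newton_step:
  fixes s :: "'a::real_algebra_1"
  defines "s' \<equiv> s + (1 / 2) *\<^sub>R ((s * s + 1) * s)"
  shows "s' * s' + 1 = (s * s + 1) * (s * s + 1) * (1 + (1 / 4) *\<^sub>R (s * s))"
proof -
  have double: "c *\<^sub>R x + c *\<^sub>R x = (2 * c) *\<^sub>R x" "c *\<^sub>R x + (c *\<^sub>R x + y) = (2 * c) *\<^sub>R x + y"
    for c and x y :: 'a
    by (simp_all add: scaleR_2 flip: scaleR_scaleR)
  show ?thesis
    unfolding s'_def by (simp add: algebra_simps double)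
qed

lemma sqrt_minus_one_in_bicommutant_exists:
  fixes m :: "'a::real_algebra_1"
  assumes nil: "(m * m + 1) ^ k = 0"
  obtains s where "s \<in> bicommutant m" "s * s = -1" "(m - s) ^ k = 0"
proof -
  define e where "e = m * m + 1"
  have e: "e \<in> bicommutant m"
    unfolding e_def by (intro bicommutant_intros)
  have "\<exists>s u c. s \<in> bicommutant m \<and> u \<in> bicommutant m \<and> c \<in> bicommutant m \<and>
      s * s + 1 = e ^ (2 ^ n) * u \<and> m - s = e * c" for n
  proof (induction n)
    case 0
    show ?case
      by (rule exI[of _ m], rule exI[of _ 1], rule exI[of _ 0]) (simp add: e_def bicommutant_intros)
  next
    case (Suc n)
    then obtain s u c where s: "s \<in> bicommutant m" and u: "u \<in> bicommutant m"
      and c: "c \<in> bicommutant m" and su: "s * s + 1 = e ^ (2 ^ n) * u" and sc: "m - s = e * c"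
      by blast
    define s' where "s' = s + (1 / 2) *\<^sub>R ((s * s + 1) * s)"
    define u' where "u' = u * u * (1 + (1 / 4) *\<^sub>R (s * s))"
    define c' where "c' = c - (1 / 2) *\<^sub>R (e ^ (2 ^ n - 1) * u * s)"
    have "e ^ (2 ^ n) * u = u * e ^ (2 ^ n)"
      using bicommutant_commute bicommutant_power e u by blast
    then have eu: "u * (e ^ (2 ^ n) * y) = e ^ (2 ^ n) * (u * y)" for y
      by (metis mult.assoc)
    have e2: "e ^ (2 ^ Suc n) = e ^ (2 ^ n) * e ^ (2 ^ n)"
      by (simp flip: power_add mult_2)
    have "s' * s' + 1 = (s * s + 1) * (s * s + 1) * (1 + (1 / 4) *\<^sub>R (s * s))"
      unfolding s'_def by (rule sqrt_minus_one_newton_step)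
    also have "\<dots> = e ^ (2 ^ n) * u * (e ^ (2 ^ n) * u) * (1 + (1 / 4) *\<^sub>R (s * s))"
      by (simp only: su)
    also have "\<dots> = e ^ (2 ^ Suc n) * u'"
      unfolding u'_def e2 by (simp add: mult.assoc eu)
    finally have su': "s' * s' + 1 = e ^ (2 ^ Suc n) * u'" .
    have "e ^ (2 ^ n) = e * e ^ (2 ^ n - 1)"
      by (simp add: power_eq_if[of e "2 ^ n"])
    then have sc': "m - s' = e * c'"
      unfolding s'_def c'_def using su sc by (simp add: algebra_simps)
    have "s' \<in> bicommutant m" "u' \<in> bicommutant m" "c' \<in> bicommutant m"
      unfolding s'_def u'_def c'_def by (intro bicommutant_intros s u c e)+
    with su' sc' show ?case by blast
  qed
  then obtain s u c where s: "s \<in> bicommutant m" and u: "u \<in> bicommutant m"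
    and c: "c \<in> bicommutant m" and su: "s * s + 1 = e ^ (2 ^ k) * u" and sc: "m - s = e * c"
    by blast
  have "e ^ (2 ^ k) = e ^ k * e ^ (2 ^ k - k)"
    by (simp flip: power_add)
  then have "s * s = -1"
    using su nil unfolding e_def by (simp add: eq_neg_iff_add_eq_0)
  moreover have "(m - s) ^ k = 0"
    unfolding sc using nil unfolding e_def
    by (intro nilpotent_mult_commuting bicommutant_commute[OF _ c])
      (simp_all add: bicommutant_intros)
  ultimately show ?thesis
    using s that by blast
qed

lemma sqrt_minus_one_near_unique:
  fixes m :: "'a::real_algebra_1"
  assumes m: "(m * m + 1) ^ k = 0"
  obtains s where "s \<in> bicommutant m" "s * s = -1" "(m - s) ^ k = 0"
    "\<And>j l. j * j = -1 \<Longrightarrow> j * m = m * j \<Longrightarrow> (m - j) ^ l = 0 \<Longrightarrow> j = s"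
proof -
  obtain s where s: "s \<in> bicommutant m" "s * s = -1" "(m - s) ^ k = 0"
    using sqrt_minus_one_in_bicommutant_exists[OF m] .
  have "j = s" if j: "j * j = -1" and jm: "j * m = m * j" and nil: "(m - j) ^ l = 0" for j l
  proof -
    have js: "j * s = s * j" and ms: "m * s = s * m"
      using bicommutantD[OF s(1)] jm by auto
    have comm: "(m - s) * (- (m - j)) = (- (m - j)) * (m - s)"
      using jm js ms by (simp add: algebra_simps)
    have "(- (m - j)) ^ l = 0"
      using nil by (metis mult_zero_right power_minus)
    with comm s(3) have "((m - s) + - (m - j)) ^ (k + l) = 0"
      by (rule nilpotent_add_commuting)
    then show "j = s"
      using sqrt_minus_one_unique[OF j s(2) js] by simp
  qed
  with s that show ?thesis
    by blast
qed

lemma square_plus_one_nilpotent_transfer: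
  fixes x y :: "'a::ring_1"
  assumes xy: "x * y = y * x" and x: "(x * x + 1) ^ k = 0" and nil: "(y - x) ^ l = 0"
  shows "(y * y + 1) ^ (k + l) = 0"
proof -
  define n where "n = y - x"
  have xn: "x * n = n * x"
    unfolding n_def using xy by (simp add: algebra_simps)
  have y: "y * y + 1 = (x * x + 1) + n * (x + x + n)"
    unfolding n_def using xy by (simp add: algebra_simps)
  have comm: "(x * x + 1) * (n * (x + x + n)) = (n * (x + x + n)) * (x * x + 1)"
    using xn by (simp add: algebra_simps) (metis mult.assoc)
  have "(n * (x + x + n)) ^ l = 0"
    using xn nil unfolding n_def[symmetric]
    by (intro nilpotent_mult_commuting) (simp_all add: algebra_simps)
  with comm x show ?thesis
    unfolding y by (rule nilpotent_add_commuting)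
qed

section \<open>Evaluating real polynomials in a real algebra\<close>

definition aeval :: "real poly \<Rightarrow> 'a::real_algebra_1 \<Rightarrow> 'a" where
  "aeval p a = (\<Sum>i\<le>degree p. coeff p i *\<^sub>R a ^ i)"

lemma aeval_eq_sum_lessThan: "degree p < n \<Longrightarrow> aeval p a = (\<Sum>i<n. coeff p i *\<^sub>R a ^ i)"
  unfolding aeval_def by (rule sum.mono_neutral_left) (auto simp: coeff_eq_0)

lemma aeval_0 [simp]: "aeval 0 a = 0"
  by (simp add: aeval_def)

lemma aeval_pCons: "aeval (pCons c p) a = c *\<^sub>R 1 + a * aeval p a"
proof -
  have "aeval (pCons c p) a = (\<Sum>i<Suc (Suc (degree p)). coeff (pCons c p) i *\<^sub>R a ^ i)"
    by (rule aeval_eq_sum_lessThan) (metis degree_pCons_le le_imp_less_Suc)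
  also have "\<dots> = c *\<^sub>R 1 + a * (\<Sum>i<Suc (degree p). coeff p i *\<^sub>R a ^ i)"
    by (subst sum.lessThan_Suc_shift, simp only: coeff_pCons_0 coeff_pCons_Suc power_0 power_Suc
        sum_distrib_left mult_scaleR_right)
  finally show ?thesis
    by (simp only: aeval_eq_sum_lessThan[of p "Suc (degree p)"] lessI)
qed

lemma aeval_1 [simp]: "aeval 1 a = 1"
  by (simp add: one_pCons aeval_pCons)

lemma aeval_add [simp]: "aeval (p + q) a = aeval p a + aeval q a"
proof (induction p arbitrary: q)
  case (pCons c p)
  then show ?case
    by (cases q rule: pCons_cases) (simp add: aeval_pCons scaleR_add_left distrib_left)
qed simp

lemma aeval_smult [simp]: "aeval (smult c p) a = c *\<^sub>R aeval p a"
  by (induction p) (simp_all add: aeval_pCons scaleR_add_right)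

lemma aeval_mult [simp]: "aeval (p * q) a = aeval p a * aeval q a"
  by (induction p) (simp_all add: aeval_pCons algebra_simps aeval_pCons[of 0, simplified])

lemma aeval_power [simp]: "aeval (p ^ n) a = aeval p a ^ n"
  by (induction n) simp_all

lemma aeval_eq_0_if_prime_nilpotent:
  fixes a :: "'a::real_algebra_1"
  assumes q: "prime_elem q" and sq: "\<not> q * q dvd p" and p: "aeval p a = 0"
    and nil: "aeval q a ^ r = 0"
  shows "aeval q a = 0"
proof -
  obtain e h where peh: "p = h * q ^ e" and e: "e \<le> 1" and h: "\<not> q dvd h"
  proof (cases "q dvd p")
    case True
    then obtain h where "p = q * h"
      by blast
    with sq that[of h 1] show ?thesis
      by (auto simp: mult.commute)
  next
    case False
    with that[of p 0] show ?thesis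
      by simp
  qed
  have "coprime h (q ^ r)"
    using prime_elem_imp_coprime[OF q h] by (simp add: coprime_commute)
  then obtain u v where "u * h + v * q ^ r = 1"
    by (metis bezout_coefficients_fst_snd coprime_imp_gcd_eq_1)
  then have "aeval u a * aeval h a = 1"
    using nil by (metis aeval_1 aeval_add aeval_mult aeval_power add_0_right mult_zero_right)
  moreover have "aeval h a * aeval q a ^ e = 0"
    using p peh by simp
  ultimately have "aeval q a ^ e = 0"
    by (metis mult.assoc mult_1 mult_zero_right)
  then show ?thesis
    using e by (cases e) auto
qed

lemma irreducible_X2_plus_1: "irreducible [:1, 0, 1 :: real:]"
proof (rule irreducibleI)
  fix a b :: "real poly"
  assume ab: "[:1, 0, 1:] = a * b"
  show "a dvd 1 \<or> b dvd 1"
  proof (rule ccontr)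
    assume "\<not> (a dvd 1 \<or> b dvd 1)"
    moreover have "a \<noteq> 0" "b \<noteq> 0"
      using ab by auto
    moreover have "degree (a * b) = 2"
      by (simp flip: ab)
    ultimately have "degree a = 1"
      by (auto simp: is_unit_iff_degree degree_mult_eq)
    then obtain c0 c1 where a: "a = [:c0, c1:]" and "c1 \<noteq> 0"
      by (rule degree1_coeffs)
    then have "poly [:1, 0, 1:] (- c0 / c1) = 0"
      unfolding ab by simp
    moreover have "poly [:1, 0, 1 :: real:] x > 0" for x
      by (simp add: add_pos_nonneg)
    ultimately show False
      by (metis less_irrefl)
  qed
qed (auto simp: is_unit_iff_degree)

lemma map_poly_of_real_mult:
  "map_poly of_real (p * q) = map_poly of_real p * (map_poly of_real q :: complex poly)"
  by (rule poly_eqI) (simp add: coeff_mult coeff_map_poly)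

lemma X2_plus_1_square_not_dvd_if_simple_roots:
  fixes p :: "real poly"
  assumes "\<forall>z :: complex. poly (map_poly of_real p) z = 0 \<longrightarrow>
      poly (pderiv (map_poly of_real p)) z \<noteq> 0"
  shows "\<not> [:1, 0, 1:] * [:1, 0, 1:] dvd p"
proof
  define q :: "complex poly" where "q = map_poly of_real [:1, 0, 1:]"
  assume "[:1, 0, 1:] * [:1, 0, 1:] dvd p"
  then obtain h where "p = [:1, 0, 1:] * ([:1, 0, 1:] * h)"
    by (metis dvdE mult.assoc)
  then have p: "map_poly of_real p = q * (q * map_poly of_real h)"
    unfolding q_def by (simp only: map_poly_of_real_mult)
  have "poly q \<i> = 0"
    unfolding q_def by (simp add: map_poly_pCons)
  then have "poly (map_poly of_real p) \<i> = 0" "poly (pderiv (map_poly of_real p)) \<i> = 0"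
    unfolding p by (simp_all add: pderiv_mult)
  with assms show False
    by blast
qed

lemma aeval_X2_plus_1: "aeval [:1, 0, 1:] a = a * a + 1"
  by (simp add: aeval_pCons)

lemma sqrt_minus_one_if_semisimple:
  fixes j :: "'a::real_algebra_1"
  assumes p: "aeval p j = 0"
    and simple: "\<forall>z :: complex. poly (map_poly of_real p) z = 0 \<longrightarrow>
      poly (pderiv (map_poly of_real p)) z \<noteq> 0"
    and nil: "(j * j + 1) ^ r = 0"
  shows "j * j = -1"
proof -
  have "aeval [:1, 0, 1:] j = 0"
  proof (rule aeval_eq_0_if_prime_nilpotent[OF _ _ p])
    show "prime_elem [:1, 0, 1 :: real:]"
      by (rule field_poly_irreducible_imp_prime[OF irreducible_X2_plus_1])
    show "\<not> [:1, 0, 1:] * [:1, 0, 1:] dvd p"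
      using simple by (rule X2_plus_1_square_not_dvd_if_simple_roots)
    show "aeval [:1, 0, 1:] j ^ r = 0"
      using nil by (simp only: aeval_X2_plus_1)
  qed
  then show ?thesis
    by (simp add: aeval_X2_plus_1 eq_neg_iff_add_eq_0)
qed

lemma semisimple_part_eq_sqrt_minus_one:
  fixes m j n j0 :: "'a::real_algebra_1"
  assumes m: "m = j + n" and jn: "j * n = n * j" and n: "n ^ k = 0"
    and p: "aeval p j = 0"
    and simple: "\<forall>z :: complex. poly (map_poly of_real p) z = 0 \<longrightarrow>
      poly (pderiv (map_poly of_real p)) z \<noteq> 0"
    and j0: "j0 * j0 = -1" "j0 * m = m * j0" "(m - j0) ^ k0 = 0"
  shows "j = j0" and "j \<in> bicommutant m"
proof -
  have m2: "(m * m + 1) ^ (1 + k0) = 0"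
    using j0 by (intro square_plus_one_nilpotent_transfer[of j0]) simp_all
  then obtain s where s: "s \<in> bicommutant m"
    and s_unique: "\<And>x l. x * x = -1 \<Longrightarrow> x * m = m * x \<Longrightarrow> (m - x) ^ l = 0 \<Longrightarrow> x = s"
    using sqrt_minus_one_near_unique[OF m2] by metis
  have jm: "j * m = m * j"
    unfolding m using jn by (simp add: algebra_simps)
  have "j - m = - n"
    unfolding m by simp
  then have "(j - m) ^ k = 0"
    using n by (metis mult_zero_right power_minus)
  then have "(j * j + 1) ^ (1 + k0 + k) = 0"
    by (rule square_plus_one_nilpotent_transfer[OF jm[symmetric] m2])
  then have "j * j = -1"
    by (rule sqrt_minus_one_if_semisimple[OF p simple])
  then have "j = s"
    using jm n by (intro s_unique) (simp_all add: m)
  moreover have "j0 = s"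
    using j0 by (intro s_unique)
  ultimately show "j = j0" "j \<in> bicommutant m"
    using s by simp_all
qed

section \<open>Linear endomorphisms as a real algebra\<close>

typedef (overloaded) 'a endo = "{f :: 'a::euclidean_space \<Rightarrow> 'a. linear f}"
  morphisms endo_apply Endo
  using linear_id by (auto simp: id_def)

setup_lifting type_definition_endo

instantiation endo :: (euclidean_space) real_algebra_1
begin

lift_definition zero_endo :: "'a endo" is "\<lambda>x. 0"
  by (rule linear_zero)
lift_definition one_endo :: "'a endo" is "\<lambda>x. x"
  by (rule linear_ident)
lift_definition plus_endo :: "'a endo \<Rightarrow> 'a endo \<Rightarrow> 'a endo" is "\<lambda>f g x. f x + g x"
  by (rule linear_compose_add)
lift_definition minus_endo :: "'a endo \<Rightarrow> 'a endo \<Rightarrow> 'a endo" is "\<lambda>f g x. f x - g x"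
  by (rule linear_compose_sub)
lift_definition uminus_endo :: "'a endo \<Rightarrow> 'a endo" is "\<lambda>f x. - f x"
  by (rule linear_compose_neg)
lift_definition times_endo :: "'a endo \<Rightarrow> 'a endo \<Rightarrow> 'a endo" is "\<lambda>f g x. f (g x)"
  by (rule linear_compose[unfolded o_def])
lift_definition scaleR_endo :: "real \<Rightarrow> 'a endo \<Rightarrow> 'a endo" is "\<lambda>c f x. c *\<^sub>R f x"
  by (rule linear_compose_scale_right)

instance
proof
  show "(0 :: 'a endo) \<noteq> 1"
    by transfer (metis (full_types) nonzero_Basis SOME_Basis)
qed (transfer; auto simp: algebra_simps linear_iff fun_eq_iff)+

end

lemma endo_apply_simps [simp]:
  "endo_apply 0 x = 0"
  "endo_apply 1 x = x"
  "endo_apply (a + b) x = endo_apply a x + endo_apply b x"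
  "endo_apply (a - b) x = endo_apply a x - endo_apply b x"
  "endo_apply (- a) x = - endo_apply a x"
  "endo_apply (a * b) x = endo_apply a (endo_apply b x)"
  "endo_apply (c *\<^sub>R a) x = c *\<^sub>R endo_apply a x"
  by (transfer; simp)+

lemma endo_apply_Endo [simp]: "linear f \<Longrightarrow> endo_apply (Endo f) = f"
  by (simp add: Endo_inverse)

lemma endo_eqI: "(\<And>x. endo_apply a x = endo_apply b x) \<Longrightarrow> a = b"
  by (simp add: endo_apply_inject[symmetric] fun_eq_iff)

lemma endo_apply_power: "endo_apply (a ^ n) = endo_apply a ^^ n"
  by (induction n) (auto simp: funpow_Suc_right)

lemma endo_apply_sum: "endo_apply (sum f S) x = (\<Sum>i\<in>S. endo_apply (f i) x)"
  by (induction S rule: infinite_finite_induct) auto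

lemma endo_apply_aeval: "endo_apply (aeval p a) x = poly_op p (endo_apply a) x"
  unfolding aeval_def poly_op_def by (simp add: endo_apply_sum endo_apply_power)

lemma nilpotent_op_iff_Endo: "linear f \<Longrightarrow> nilpotent_op f \<longleftrightarrow> (\<exists>k. Endo f ^ k = 0)"
  unfolding nilpotent_op_def endo_apply_inject[symmetric]
  by (simp add: endo_apply_power fun_eq_iff)

lemma semisimple_part_eq_complex_structure:
  fixes M J J0 :: "'v::euclidean_space \<Rightarrow> 'v"
  assumes J: "is_semisimple_part J M"
    and J0: "linear J0" "\<And>x. J0 (J0 x) = - x" "\<And>x. J0 (M x) = M (J0 x)"
    and nil: "nilpotent_op (\<lambda>x. M x - J0 x)"
  shows "J = J0" and "\<And>Q. linear Q \<Longrightarrow> Q \<circ> M = M \<circ> Q \<Longrightarrow> Q \<circ> J = J \<circ> Q"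
proof -
  obtain N where lin: "linear J" "linear N" and ss: "semisimple_op J" and "nilpotent_op N"
    and JN: "J \<circ> N = N \<circ> J" and M: "\<And>x. M x = J x + N x"
    using J unfolding is_semisimple_part_def by blast
  then obtain k where k: "Endo N ^ k = 0"
    by (auto simp: nilpotent_op_iff_Endo)
  obtain p where p: "\<forall>x. poly_op p J x = 0"
    and simple: "\<forall>z :: complex. poly (map_poly of_real p) z = 0 \<longrightarrow>
      poly (pderiv (map_poly of_real p)) z \<noteq> 0"
    using ss unfolding semisimple_op_def by blast
  have "M = (\<lambda>x. J x + N x)"
    using M by blast
  then have linM: "linear M"
    using linear_compose_add[OF lin] by simp
  have "Endo (\<lambda>x. M x - J0 x) = Endo M - Endo J0"
    using linM J0(1) by (intro endo_eqI) (simp add: linear_compose_sub)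
  then obtain k0 where k0: "(Endo M - Endo J0) ^ k0 = 0"
    using nil nilpotent_op_iff_Endo[OF linear_compose_sub[OF linM J0(1)]] by auto
  have "Endo M = Endo J + Endo N"
    using lin linM M by (intro endo_eqI) simp
  moreover have "Endo J * Endo N = Endo N * Endo J"
    using lin JN by (intro endo_eqI) (simp add: fun_eq_iff)
  moreover have "aeval p (Endo J) = 0"
    using lin p by (intro endo_eqI) (simp add: endo_apply_aeval)
  moreover have "Endo J0 * Endo J0 = -1" "Endo J0 * Endo M = Endo M * Endo J0"
    using J0 linM by (auto intro!: endo_eqI)
  ultimately have "Endo J = Endo J0" and J_bicomm: "Endo J \<in> bicommutant (Endo M)"
    using semisimple_part_eq_sqrt_minus_one[OF _ _ k _ simple _ _ k0] by blast+
  then show "J = J0"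
    using lin J0(1) by (metis endo_apply_Endo)
  show "Q \<circ> J = J \<circ> Q" if Q: "linear Q" "Q \<circ> M = M \<circ> Q" for Q
  proof -
    have "Endo Q * Endo M = Endo M * Endo Q"
      using Q linM by (intro endo_eqI) (simp add: fun_eq_iff)
    then have "Endo Q * Endo J = Endo J * Endo Q"
      by (rule bicommutantD[OF J_bicomm])
    then have "endo_apply (Endo Q * Endo J) = endo_apply (Endo J * Endo Q)"
      by simp
    with Q(1) lin(1) show ?thesis
      by (simp add: fun_eq_iff)
  qed
qed

section \<open>Linear maps and pairs of forms\<close>

lemma bilinear_compose:
  assumes "bilinear F" "linear f" "linear g"
  shows "bilinear (\<lambda>x y. F (f x) (g y))"
  using assms linear_compose[of f "\<lambda>x. F x _"] linear_compose[of g "F _"]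
  unfolding bilinear_def by (simp add: o_def)

lemma commute_if_adjoint:
  assumes bilB: "bilinear B" and nondegB: "\<forall>u. (\<forall>v. B u v = 0) \<longrightarrow> u = 0"
    and PA: "\<forall>u v. A u v = B (P u) v"
    and TA: "\<And>x y. A (T x) y = A x (T y)" and TB: "\<And>x y. B (T x) y = B x (T y)"
  shows "P (T u) = T (P u)"
proof -
  have "B (P (T u) - T (P u)) v = 0" for v
    using PA TA TB by (simp add: bilinear_lsub[OF bilB])
  then have "P (T u) - T (P u) = 0"
    using nondegB by blast
  then show ?thesis
    by simp
qed

lemma nilpotent_if_level_decreasing:
  fixes N :: "'v::real_vector \<Rightarrow> 'v" and e :: "'i \<Rightarrow> 'v" and level :: "'i \<Rightarrow> nat"
  assumes N: "linear N" and span: "span (e ` I) = UNIV" and bound: "\<And>i. i \<in> I \<Longrightarrow> level i < n"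
    and decr: "\<And>l. l \<in> I \<Longrightarrow> N (e l) \<in> span (e ` {i \<in> I. level i < level l})"
  shows "(N ^^ n) x = 0"
proof -
  define V where "V c = span (e ` {i \<in> I. level i < c})" for c
  have step: "N x \<in> V c" if "x \<in> V (Suc c)" for x c
  proof -
    have "N (e l) \<in> V c" if "l \<in> I" "level l < Suc c" for l
    proof -
      have "V (level l) \<subseteq> V c"
        unfolding V_def using that by (intro span_mono) auto
      with decr[OF that(1)] show ?thesis
        by (auto simp: V_def)
    qed
    then have "e ` {i \<in> I. level i < Suc c} \<subseteq> N -` V c"
      by auto
    then have "V (Suc c) \<subseteq> N -` V c"
      unfolding V_def by (intro span_minimal linear_subspace_vimage[OF N]) simp_all
    with that show ?thesis
      by blast
  qed
  have "(N ^^ c) x \<in> V (n - c)" if "c \<le> n" for c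
    using that
  proof (induction c)
    case 0
    have "e ` I \<subseteq> e ` {i \<in> I. level i < n}"
      using bound by blast
    then have "span (e ` I) \<subseteq> V n"
      unfolding V_def by (rule span_mono)
    then show ?case
      using span by auto
  next
    case (Suc c)
    then have "(N ^^ c) x \<in> V (Suc (n - Suc c))"
      by (simp add: Suc_diff_Suc)
    then show ?case
      by (simp add: step)
  qed
  from this[of n] show ?thesis
    by (simp add: V_def)
qed

lemma aut_real_commute_P:
  assumes bilB: "bilinear B" and nondegB: "\<forall>u. (\<forall>v. B u v = 0) \<longrightarrow> u = 0"
    and P: "\<forall>u v. A u v = B (P u) v" and Q: "Q \<in> aut_real A B"
  shows "P (Q u) = Q (P u)"
proof -
  have "B (P (Q u) - Q (P u)) (Q v) = 0" for v
    using Q P by (simp add: aut_real_def bilinear_lsub[OF bilB])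
  moreover have "surj Q"
    using Q by (simp add: aut_real_def bij_is_surj)
  ultimately have "\<forall>w. B (P (Q u) - Q (P u)) w = 0"
    by (metis surjD)
  then have "P (Q u) - Q (P u) = 0"
    using nondegB by blast
  then show ?thesis
    by simp
qed

lemma aut_complex_subset_aut_real: "aut_complex J A B \<subseteq> aut_real A B"
proof
  fix Q assume "Q \<in> aut_complex J A B"
  then have Q: "complex_linear_J J Q" "bij Q"
    and QA: "\<And>u v. cform J A (Q u) (Q v) = cform J A u v"
    and QB: "\<And>u v. cform J B (Q u) (Q v) = cform J B u v"
    by (auto simp: aut_complex_def)
  have "Q (c *\<^sub>R v) = c *\<^sub>R Q v" for c v
    using Q(1) unfolding complex_linear_J_def
    by (metis Im_complex_of_real Re_complex_of_real add_0_right cscale_def scaleR_zero_left)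
  then have "linear Q"
    using Q(1) by (simp add: complex_linear_J_def linear_iff)
  moreover have "A (Q u) (Q v) = A u v" "B (Q u) (Q v) = B u v" for u v
    using QA[of u v] QB[of u v] by (simp_all add: cform_def)
  ultimately show "Q \<in> aut_real A B"
    using Q(2) by (simp add: aut_real_def)
qed

lemma aut_real_subset_aut_complex:
  assumes "\<forall>Q\<in>aut_real A B. Q \<circ> J = J \<circ> Q"
  shows "aut_real A B \<subseteq> aut_complex J A B"
proof
  fix Q assume "Q \<in> aut_real A B"
  then have Q: "linear Q" "bij Q" "\<And>u v. A (Q u) (Q v) = A u v" "\<And>u v. B (Q u) (Q v) = B u v"
    and QJ: "\<And>v. Q (J v) = J (Q v)"
    using assms by (auto simp: aut_real_def fun_eq_iff)
  have "complex_linear_J J Q"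
    using Q(1) by (simp add: complex_linear_J_def cscale_def linear_add linear_scale QJ)
  moreover have "cform J F (Q u) (Q v) = cform J F u v" if "\<And>u v. F (Q u) (Q v) = F u v" for F u v
    using that by (simp add: cform_def flip: QJ)
  ultimately show "Q \<in> aut_complex J A B"
    using Q by (simp add: aut_complex_def)
qed

section \<open>Bases adapted to a sum of real Jordan blocks\<close>

fun block_start :: "nat list \<Rightarrow> nat \<Rightarrow> nat" where
  "block_start [] i = 0"
| "block_start (k # ks) i = (if i < 4 * k then 0 else 4 * k + block_start ks (i - 4 * k))"

fun block_size :: "nat list \<Rightarrow> nat \<Rightarrow> nat" where
  "block_size [] i = 0"
| "block_size (k # ks) i = (if i < 4 * k then k else block_size ks (i - 4 * k))"

lemma block_start_bounds:
  assumes "i < 4 * sum_list ks"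
  shows "block_start ks i \<le> i \<and> i < block_start ks i + 4 * block_size ks i \<and> even (block_start ks i)
    \<and> block_size ks i \<in> set ks \<and> block_start ks i + 4 * block_size ks i \<le> 4 * sum_list ks"
  using assms
proof (induction ks arbitrary: i)
  case (Cons k ks)
  show ?case
  proof (cases "i < 4 * k")
    case False
    with Cons.prems have "i - 4 * k < 4 * sum_list ks"
      by simp
    from Cons.IH[OF this] False show ?thesis
      by auto
  qed simp
qed simp

lemma block_start_size_eq:
  assumes "i < 4 * sum_list ks" "block_start ks i \<le> i'"
    "i' < block_start ks i + 4 * block_size ks i"
  shows "block_start ks i' = block_start ks i \<and> block_size ks i' = block_size ks i"
  using assms
proof (induction ks arbitrary: i i')
  case (Cons k ks)
  show ?case
  proof (cases "i < 4 * k")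
    case False
    with Cons.prems have "i - 4 * k < 4 * sum_list ks" "\<not> i' < 4 * k"
      "block_start ks (i - 4 * k) \<le> i' - 4 * k"
      "i' - 4 * k < block_start ks (i - 4 * k) + 4 * block_size ks (i - 4 * k)"
      by auto
    with Cons.IH False show ?thesis
      by auto
  qed (use Cons.prems in simp)
qed simp

lemma block_size_eq_if_block_start_eq:
  assumes "\<forall>k\<in>set ks. 0 < k" "i < 4 * sum_list ks" "j < 4 * sum_list ks"
    "block_start ks i = block_start ks j"
  shows "block_size ks i = block_size ks j"
  using assms
proof (induction ks arbitrary: i j)
  case (Cons k ks)
  then have k: "0 < k"
    by simp
  show ?case
  proof (cases "i < 4 * k")
    case True
    with Cons.prems k show ?thesis
      by (cases "j < 4 * k") auto
  next
    case i: False
    show ?thesis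
    proof (cases "j < 4 * k")
      case False
      with Cons.prems i have "i - 4 * k < 4 * sum_list ks" "j - 4 * k < 4 * sum_list ks"
        by auto
      from Cons.IH[OF _ this] Cons.prems i False show ?thesis
        by auto
    qed (use Cons.prems k i in auto)
  qed
qed simp

lemma blockdiag_eq_block:
  assumes "\<forall>k\<in>set ks. 0 < k" "i < 4 * sum_list ks" "j < 4 * sum_list ks"
  shows "blockdiag M ks i j =
    (if block_start ks i = block_start ks j
     then M (block_size ks i) (i - block_start ks i) (j - block_start ks j) else 0)"
  using assms
proof (induction ks arbitrary: i j)
  case (Cons k ks)
  show ?case
  proof (cases "i < 4 * k"; cases "j < 4 * k")
    assume "\<not> i < 4 * k" "\<not> j < 4 * k"
    with Cons.prems have "i - 4 * k < 4 * sum_list ks" "j - 4 * k < 4 * sum_list ks"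
      by auto
    from Cons.IH[OF _ this] Cons.prems \<open>\<not> i < 4 * k\<close> \<open>\<not> j < 4 * k\<close> show ?thesis
      by auto
  qed simp_all
qed simp

text \<open>Inside a real Jordan block of size \<open>k\<close>, the basis vector with local index
  \<open>block_index k p a r\<close> lies in the second Lagrangian half iff \<open>p\<close>, in the \<open>a\<close>-th
  \<open>2 \<times> 2\<close> block of that half, at position \<open>r\<close> in it.\<close>

definition block_index :: "nat \<Rightarrow> bool \<Rightarrow> nat \<Rightarrow> nat \<Rightarrow> nat" where
  "block_index k p a r = (if p then 2 * k else 0) + 2 * a + r"

lemma block_index_split:
  "l = block_index k (2 * k \<le> l) ((if 2 * k \<le> l then l - 2 * k else l) div 2) (l mod 2)"
  unfolding block_index_def by simp presburger

definition jk_J_local :: "real \<Rightarrow> real \<Rightarrow> nat \<Rightarrow> nat \<Rightarrow> nat \<Rightarrow> nat \<Rightarrow> real" where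
  "jk_J_local \<alpha> \<beta> a r a' r' =
    (if a = a' then (if r = r' then \<alpha> else if r = 0 then - \<beta> else \<beta>)
     else if a' = Suc a \<and> r = r' then 1 else 0)"

definition jblock_A_local ::
  "real \<Rightarrow> real \<Rightarrow> bool \<Rightarrow> nat \<Rightarrow> nat \<Rightarrow> bool \<Rightarrow> nat \<Rightarrow> nat \<Rightarrow> real" where
  "jblock_A_local \<alpha> \<beta> p a r p' a' r' =
    (if \<not> p \<and> p' then jk_J_local \<alpha> \<beta> a r a' r'
     else if p \<and> \<not> p' then - jk_J_local \<alpha> \<beta> a' r' a r else 0)"

definition jblock_B_local :: "bool \<Rightarrow> nat \<Rightarrow> nat \<Rightarrow> bool \<Rightarrow> nat \<Rightarrow> nat \<Rightarrow> real" where
  "jblock_B_local p a r p' a' r' =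
    (if a = a' \<and> r = r' then (if \<not> p \<and> p' then 1 else if p \<and> \<not> p' then -1 else 0) else 0)"

lemma jk_J_block_index:
  assumes "r < 2" "r' < 2"
  shows "jk_J \<alpha> \<beta> (2 * a + r) (2 * a' + r') = jk_J_local \<alpha> \<beta> a r a' r'"
proof -
  have "r = 0 \<or> r = 1" "r' = 0 \<or> r' = 1"
    using assms by auto
  then show ?thesis
    unfolding jk_J_def jk_J_local_def Let_def by auto
qed

lemma jblock_A_block_index:
  assumes "a < k" "a' < k" "r < 2" "r' < 2"
  shows "jblock_A \<alpha> \<beta> k (block_index k p a r) (block_index k p' a' r') =
    jblock_A_local \<alpha> \<beta> p a r p' a' r'"
  using assms unfolding jblock_A_def jblock_A_local_def block_index_def Let_def
  by (auto simp: jk_J_block_index)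

lemma jblock_B_block_index:
  assumes "a < k" "a' < k" "r < 2" "r' < 2"
  shows "jblock_B k (block_index k p a r) (block_index k p' a' r') = jblock_B_local p a r p' a' r'"
  using assms unfolding jblock_B_def jblock_B_local_def block_index_def Let_def
  by (auto; presburger)

lemma jblock_local_eq_0_same_half:
  "jblock_A_local \<alpha> \<beta> p a r p a' r' = 0" "jblock_B_local p a r p a' r' = 0"
  unfolding jblock_A_local_def jblock_B_local_def by simp_all

text \<open>The complex structure maps the basis vector at position \<open>r\<close> of a \<open>2 \<times> 2\<close> block to
  \<open>jsign p r\<close> times the one at position \<open>1 - r\<close>.\<close>

definition jsign :: "bool \<Rightarrow> nat \<Rightarrow> real" where
  "jsign p r = (if (\<not> p) = (r = 0) then -1 else 1)"

lemma jsign_flip: "r < 2 \<Longrightarrow> jsign p (1 - r) = - jsign p r"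
  by (auto simp: jsign_def)

lemma jblock_B_local_jsign:
  assumes "r < 2" "r' < 2"
  shows "jsign p r * jblock_B_local p a (1 - r) p' a' r' =
    jsign p' r' * jblock_B_local p a r p' a' (1 - r')"
proof -
  have "r = 0 \<or> r = 1" "r' = 0 \<or> r' = 1"
    using assms by auto
  then show ?thesis
    unfolding jsign_def jblock_B_local_def by (cases p; cases p') auto
qed

lemma jblock_A_local_jsign:
  assumes "r < 2" "r' < 2"
  shows "jsign p r * jblock_A_local \<alpha> \<beta> p a (1 - r) p' a' r' =
    jsign p' r' * jblock_A_local \<alpha> \<beta> p a r p' a' (1 - r')"
proof -
  have "r = 0 \<or> r = 1" "r' = 0 \<or> r' = 1"
    using assms by auto
  then show ?thesis
    unfolding jsign_def jblock_A_local_def jk_J_local_def by (cases p; cases p') auto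
qed

text \<open>With \<open>M = (P - \<alpha>) / \<beta>\<close>, the entry in the hypothesis of \<open>depth_decreasing\<close> is
  \<open>B ((M - J) e) e'\<close> for the local basis vectors \<open>e\<close> at \<open>(p, a, r)\<close> and \<open>e'\<close> at
  \<open>(p', a', r')\<close>, i.e. up to sign the coordinate of \<open>(M - J) e\<close> along the vector at
  \<open>(\<not> p', a', r')\<close>. So \<open>M - J\<close> strictly lowers \<open>depth\<close>: it pushes the first half towards
  its last \<open>2 \<times> 2\<close> block and the second half towards its first one.\<close>

definition depth :: "nat \<Rightarrow> bool \<Rightarrow> nat \<Rightarrow> nat" where
  "depth k p a = (if p then a else k - 1 - a)"

lemma depth_decreasing:
  assumes "a < k" "a' < k" "r < 2" "r' < 2" "\<beta> \<noteq> 0"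
    and "(1 / \<beta>) * (jblock_A_local \<alpha> \<beta> p a r p' a' r' - \<alpha> * jblock_B_local p a r p' a' r')
      - jsign p r * jblock_B_local p a (1 - r) p' a' r' \<noteq> 0"
  shows "depth k (\<not> p') a' < depth k p a"
proof -
  have r: "r = 0 \<or> r = 1" "r' = 0 \<or> r' = 1"
    using assms by auto
  show ?thesis
  proof (cases p; cases p')
    assume "\<not> p" "p'"
    then have "a' = Suc a"
      using assms r unfolding jblock_A_local_def jblock_B_local_def jk_J_local_def jsign_def
      by (auto split: if_splits)
    with \<open>\<not> p\<close> \<open>p'\<close> assms show ?thesis
      unfolding depth_def by auto
  next
    assume "p" "\<not> p'"
    then have "a = Suc a'"
      using assms r unfolding jblock_A_local_def jblock_B_local_def jk_J_local_def jsign_def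
      by (auto split: if_splits)
    with \<open>p\<close> \<open>\<not> p'\<close> assms show ?thesis
      unfolding depth_def by auto
  qed (use assms(6) in \<open>simp_all add: jblock_local_eq_0_same_half\<close>)
qed

locale real_jordan_basis =
  fixes A B :: "'v::euclidean_space \<Rightarrow> 'v \<Rightarrow> real" and P :: "'v \<Rightarrow> 'v"
    and \<alpha> \<beta> :: real and ks :: "nat list" and e :: "nat \<Rightarrow> 'v"
  assumes bilA: "bilinear A" and bilB: "bilinear B"
    and nondegB: "\<forall>u. (\<forall>v. B u v = 0) \<longrightarrow> u = 0"
    and beta: "\<beta> \<noteq> 0"
    and linP: "linear P" and PA: "\<forall>u v. A u v = B (P u) v"
    and kpos: "\<forall>k\<in>set ks. 0 < k"
    and inj: "inj_on e {..<4 * sum_list ks}"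
    and span: "span (e ` {..<4 * sum_list ks}) = UNIV"
    and gram: "\<forall>i<4 * sum_list ks. \<forall>j<4 * sum_list ks.
      A (e i) (e j) = blockdiag (jblock_A \<alpha> \<beta>) ks i j \<and> B (e i) (e j) = blockdiag jblock_B ks i j"
begin

abbreviation "dimV \<equiv> 4 * sum_list ks"

definition "start i = block_start ks i"
definition "bsize i = block_size ks i"
definition "upper i = (2 * bsize i \<le> i - start i)"
definition "pair i = (if upper i then i - start i - 2 * bsize i else i - start i) div 2"
definition "parity i = i mod 2"
definition "partner i = start i + block_index (bsize i) (upper i) (pair i) (1 - parity i)"
definition "opposite i = start i + block_index (bsize i) (\<not> upper i) (pair i) (parity i)"

lemma index_decode:
  assumes i: "i < dimV"
  shows "i = start i + block_index (bsize i) (upper i) (pair i) (parity i)"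
    "pair i < bsize i" "parity i < 2" "0 < bsize i"
proof -
  note bounds = block_start_bounds[OF i, folded start_def bsize_def]
  then show "0 < bsize i"
    using kpos by blast
  show "parity i < 2" "pair i < bsize i"
    using bounds unfolding parity_def pair_def upper_def by auto
  have "i - start i = block_index (bsize i) (upper i) (pair i) ((i - start i) mod 2)"
    unfolding upper_def pair_def by (rule block_index_split)
  moreover have "(i - start i) mod 2 = parity i"
    using bounds unfolding parity_def by (auto elim!: evenE simp: mod2_eq_if)
  ultimately have "i - start i = block_index (bsize i) (upper i) (pair i) (parity i)"
    by simp
  then show "i = start i + block_index (bsize i) (upper i) (pair i) (parity i)"
    using bounds by linarith
qed

lemma index_reencode:
  fixes p :: bool
  assumes i: "i < dimV" and a: "a < bsize i" and r: "r < 2"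
  defines "i' \<equiv> start i + block_index (bsize i) p a r"
  shows "i' < dimV" "start i' = start i" "bsize i' = bsize i" "upper i' = p" "pair i' = a"
    "parity i' = r"
proof -
  note bounds = block_start_bounds[OF i, folded start_def bsize_def]
  have "block_index (bsize i) p a r < 4 * bsize i"
    using a r unfolding block_index_def by auto
  then have "start i \<le> i'" "i' < start i + 4 * bsize i"
    unfolding i'_def by auto
  with block_start_size_eq[OF i] show start: "start i' = start i" and bsize: "bsize i' = bsize i"
    unfolding start_def bsize_def by blast+
  show "i' < dimV"
    using bounds \<open>i' < start i + 4 * bsize i\<close> by linarith
  have local: "i' - start i' = block_index (bsize i) p a r"
    using start unfolding i'_def by simp
  show upper: "upper i' = p"
    using a r unfolding upper_def local bsize block_index_def by auto
  show "pair i' = a"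
    using r unfolding pair_def upper local bsize block_index_def by auto
  obtain d where "start i = 2 * d"
    using bounds by blast
  then show "parity i' = r"
    using r unfolding parity_def i'_def block_index_def by (cases p; presburger)
qed

lemma partner_props:
  assumes "i < dimV"
  shows "partner i < dimV" "start (partner i) = start i" "bsize (partner i) = bsize i"
    "upper (partner i) = upper i" "pair (partner i) = pair i" "parity (partner i) = 1 - parity i"
  using index_reencode[OF assms index_decode(2)[OF assms]] unfolding partner_def by simp_all

lemma opposite_props:
  assumes "i < dimV"
  shows "opposite i < dimV" "start (opposite i) = start i" "bsize (opposite i) = bsize i"
    "upper (opposite i) = (\<not> upper i)" "pair (opposite i) = pair i" "parity (opposite i) = parity i"
  using index_reencode[OF assms index_decode(2,3)[OF assms]] unfolding opposite_def by simp_all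

lemma bsize_eq_if_start_eq: "i < dimV \<Longrightarrow> j < dimV \<Longrightarrow> start i = start j \<Longrightarrow> bsize i = bsize j"
  unfolding start_def bsize_def using block_size_eq_if_block_start_eq[OF kpos] by blast

lemma index_eqI:
  assumes "i < dimV" "j < dimV" "start i = start j" "upper i = upper j" "pair i = pair j"
    "parity i = parity j"
  shows "i = j"
proof -
  have "bsize i = bsize j"
    using bsize_eq_if_start_eq[OF assms(1-3)] .
  with assms have "start i + block_index (bsize i) (upper i) (pair i) (parity i) =
      start j + block_index (bsize j) (upper j) (pair j) (parity j)"
    by simp
  then show ?thesis
    using index_decode(1)[OF assms(1)] index_decode(1)[OF assms(2)] by linarith
qed

lemma partner_partner:
  assumes "i < dimV"
  shows "partner (partner i) = i"
proof -
  note p1 = partner_props[OF assms] and p2 = partner_props[OF partner_props(1)[OF assms]]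
  show ?thesis
    using index_decode(3)[OF assms] by (intro index_eqI[OF p2(1) assms]) (simp_all add: p1 p2)
qed

lemma blockdiag_basis:
  assumes i: "i < dimV" and j: "j < dimV"
    and local: "\<And>k p a r p' a' r'. a < k \<Longrightarrow> a' < k \<Longrightarrow> r < 2 \<Longrightarrow> r' < 2 \<Longrightarrow>
      M k (block_index k p a r) (block_index k p' a' r') = L p a r p' a' r'"
  shows "blockdiag M ks i j = (if start i = start j
    then L (upper i) (pair i) (parity i) (upper j) (pair j) (parity j) else 0)"
proof (cases "start i = start j")
  case True
  then have "bsize j = bsize i"
    using bsize_eq_if_start_eq[OF i j] by simp
  moreover have "i - start i = block_index (bsize i) (upper i) (pair i) (parity i)"
    "j - start j = block_index (bsize j) (upper j) (pair j) (parity j)"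
    using index_decode(1)[OF i] index_decode(1)[OF j] by (metis add_diff_cancel_left')+
  ultimately show ?thesis
    using True local index_decode(2,3)[OF i] index_decode(2,3)[OF j]
    by (simp add: blockdiag_eq_block[OF kpos i j, folded start_def bsize_def])
qed (simp add: blockdiag_eq_block[OF kpos i j, folded start_def bsize_def])

lemma A_basis:
  assumes "i < dimV" "j < dimV"
  shows "A (e i) (e j) = (if start i = start j
    then jblock_A_local \<alpha> \<beta> (upper i) (pair i) (parity i) (upper j) (pair j) (parity j) else 0)"
proof -
  have "A (e i) (e j) = blockdiag (jblock_A \<alpha> \<beta>) ks i j"
    using gram assms by blast
  also have "\<dots> = (if start i = start j
      then jblock_A_local \<alpha> \<beta> (upper i) (pair i) (parity i) (upper j) (pair j) (parity j) else 0)"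
    by (rule blockdiag_basis[where L = "jblock_A_local \<alpha> \<beta>", OF assms jblock_A_block_index])
  finally show ?thesis .
qed

lemma B_basis:
  assumes "i < dimV" "j < dimV"
  shows "B (e i) (e j) = (if start i = start j
    then jblock_B_local (upper i) (pair i) (parity i) (upper j) (pair j) (parity j) else 0)"
proof -
  have "B (e i) (e j) = blockdiag jblock_B ks i j"
    using gram assms by blast
  also have "\<dots> = (if start i = start j
      then jblock_B_local (upper i) (pair i) (parity i) (upper j) (pair j) (parity j) else 0)"
    by (rule blockdiag_basis[where L = jblock_B_local, OF assms jblock_B_block_index])
  finally show ?thesis .
qed

text \<open>Coordinates with respect to \<open>e\<close> are read off with \<open>B\<close>: the \<open>B\<close>-dual of \<open>e i\<close> is
  \<open>\<plusminus>e (opposite i)\<close>.\<close>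

definition "coord i x = (if upper i then -1 else 1) * B x (e (opposite i))"

definition basis_map :: "(nat \<Rightarrow> 'v) \<Rightarrow> 'v \<Rightarrow> 'v" where
  "basis_map f x = (\<Sum>i<dimV. coord i x *\<^sub>R f i)"

lemma linear_coord: "linear (coord i)"
  using bilB unfolding coord_def[abs_def] bilinear_def by (auto simp: linear_iff)

lemma coord_basis:
  assumes i: "i < dimV" and l: "l < dimV"
  shows "coord i (e l) = (if i = l then 1 else 0)"
proof -
  note opp = opposite_props[OF i]
  have "i = l" if "start l = start i" "upper l = (\<not> upper (opposite i))" "pair l = pair i"
    "parity l = parity i"
    using that opp by (intro index_eqI[OF i l]) simp_all
  then show ?thesis
    unfolding coord_def using B_basis[OF l opp(1)] opp by (auto simp: jblock_B_local_def)
qed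

lemma basis_expansion: "x = (\<Sum>i<dimV. coord i x *\<^sub>R e i)"
proof -
  obtain u where "x = (\<Sum>v\<in>e ` {..<dimV}. u v *\<^sub>R v)"
    using span span_finite[of "e ` {..<dimV}"] by auto
  then have x: "x = (\<Sum>i<dimV. u (e i) *\<^sub>R e i)"
    by (simp add: sum.reindex[OF inj])
  have "coord l x = u (e l)" if l: "l < dimV" for l
  proof -
    have "coord l x = (\<Sum>i<dimV. u (e i) * coord l (e i))"
      by (subst x) (simp add: linear_sum[OF linear_coord] linear_scale[OF linear_coord])
    also have "\<dots> = (\<Sum>i<dimV. if i = l then u (e i) else 0)"
      using coord_basis[OF l] by (intro sum.cong) auto
    finally show ?thesis
      using l by simp
  qed
  then have "(\<Sum>i<dimV. coord i x *\<^sub>R e i) = (\<Sum>i<dimV. u (e i) *\<^sub>R e i)"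
    by (intro sum.cong) simp_all
  with x show ?thesis
    by simp
qed

lemma linear_eq_on_basis:
  assumes "linear F" "linear G" "\<And>i. i < dimV \<Longrightarrow> F (e i) = G (e i)"
  shows "F x = G x"
  using assms by (subst (1 2) basis_expansion) (simp add: linear_sum linear_scale)

lemma bilinear_eq_on_basis:
  assumes "bilinear F" "bilinear G" "\<And>i j. i < dimV \<Longrightarrow> j < dimV \<Longrightarrow> F (e i) (e j) = G (e i) (e j)"
  shows "F x y = G x y"
  by (rule bilinear_eq[OF assms(1,2), of UNIV "e ` {..<dimV}" UNIV "e ` {..<dimV}"])
    (use span assms(3) in auto)

lemma linear_basis_map: "linear (basis_map f)"
  unfolding basis_map_def[abs_def] linear_iff
  by (auto simp: linear_add[OF linear_coord] linear_scale[OF linear_coord] scaleR_add_left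
      sum.distrib scaleR_sum_right)

lemma basis_map_basis:
  assumes "l < dimV"
  shows "basis_map f (e l) = f l"
proof -
  have "basis_map f (e l) = (\<Sum>i<dimV. if i = l then f i else 0)"
    unfolding basis_map_def by (rule sum.cong) (simp_all add: coord_basis assms)
  then show ?thesis
    using assms by simp
qed

section \<open>The complex structure of a sum of real Jordan blocks\<close>

definition Jc :: "'v \<Rightarrow> 'v" where
  "Jc = basis_map (\<lambda>i. jsign (upper i) (parity i) *\<^sub>R e (partner i))"

definition M :: "'v \<Rightarrow> 'v" where
  "M x = (1 / \<beta>) *\<^sub>R (P x - \<alpha> *\<^sub>R x)"

lemma linear_Jc: "linear Jc"
  unfolding Jc_def by (rule linear_basis_map)

lemma Jc_basis: "i < dimV \<Longrightarrow> Jc (e i) = jsign (upper i) (parity i) *\<^sub>R e (partner i)"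
  unfolding Jc_def by (rule basis_map_basis)

lemma Jc_Jc: "Jc (Jc x) = - x"
proof (rule linear_eq_on_basis[of "\<lambda>x. Jc (Jc x)" uminus])
  show "linear (\<lambda>x. Jc (Jc x))"
    using linear_compose[OF linear_Jc linear_Jc] by (simp add: o_def)
  show "linear (uminus :: 'v \<Rightarrow> 'v)"
    by (rule linear_uminus)
  fix i assume i: "i < dimV"
  have "jsign (upper i) (parity (partner i)) = - jsign (upper i) (parity i)"
    unfolding partner_props(6)[OF i] by (rule jsign_flip[OF index_decode(3)[OF i]])
  then have "jsign (upper i) (parity i) * jsign (upper i) (parity (partner i)) = -1"
    by (simp add: jsign_def)
  with i show "Jc (Jc (e i)) = - e i"
    by (simp add: Jc_basis linear_scale[OF linear_Jc] partner_props partner_partner)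
qed

lemma B_Jc_adjoint: "B (Jc x) y = B x (Jc y)"
proof (rule bilinear_eq_on_basis[of "\<lambda>x y. B (Jc x) y" "\<lambda>x y. B x (Jc y)"])
  show "bilinear (\<lambda>x y. B (Jc x) y)"
    by (rule bilinear_compose[OF bilB linear_Jc linear_ident])
  show "bilinear (\<lambda>x y. B x (Jc y))"
    by (rule bilinear_compose[OF bilB linear_ident linear_Jc])
  fix i j assume i: "i < dimV" and j: "j < dimV"
  then show "B (Jc (e i)) (e j) = B (e i) (Jc (e j))"
    using jblock_B_local_jsign[OF index_decode(3)[OF i] index_decode(3)[OF j],
        where p = "upper i" and a = "pair i" and p' = "upper j" and a' = "pair j"]
    by (simp add: Jc_basis bilinear_lmul[OF bilB] bilinear_rmul[OF bilB] B_basis partner_props)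
qed

lemma A_Jc_adjoint: "A (Jc x) y = A x (Jc y)"
proof (rule bilinear_eq_on_basis[of "\<lambda>x y. A (Jc x) y" "\<lambda>x y. A x (Jc y)"])
  show "bilinear (\<lambda>x y. A (Jc x) y)"
    by (rule bilinear_compose[OF bilA linear_Jc linear_ident])
  show "bilinear (\<lambda>x y. A x (Jc y))"
    by (rule bilinear_compose[OF bilA linear_ident linear_Jc])
  fix i j assume i: "i < dimV" and j: "j < dimV"
  then show "A (Jc (e i)) (e j) = A (e i) (Jc (e j))"
    using jblock_A_local_jsign[OF index_decode(3)[OF i] index_decode(3)[OF j],
        where p = "upper i" and a = "pair i" and p' = "upper j" and a' = "pair j"
          and \<alpha> = \<alpha> and \<beta> = \<beta>]
    by (simp add: Jc_basis bilinear_lmul[OF bilA] bilinear_rmul[OF bilA] A_basis partner_props)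
qed

lemma Jc_M_commute: "Jc (M x) = M (Jc x)"
proof -
  have "P (Jc x) = Jc (P x)"
    using commute_if_adjoint[OF bilB nondegB PA, of Jc] A_Jc_adjoint B_Jc_adjoint by blast
  then show ?thesis
    by (simp add: M_def linear_diff[OF linear_Jc] linear_scale[OF linear_Jc])
qed

lemma linear_M: "linear M"
  using linP unfolding M_def[abs_def]
  by (intro linear_compose_scale_right linear_compose_sub linear_compose_scale_right linear_ident)

lemma B_M: "B (M u) v = (1 / \<beta>) * (A u v - \<alpha> * B u v)"
  using PA by (simp add: M_def bilinear_lmul[OF bilB] bilinear_lsub[OF bilB])

definition "level i = depth (bsize i) (upper i) (pair i)"

lemma coord_M_minus_Jc_level:
  assumes i: "i < dimV" and l: "l < dimV" and ne: "coord i (M (e l) - Jc (e l)) \<noteq> 0"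
  shows "level i < level l"
proof -
  define j where "j = opposite i"
  note j = opposite_props[OF i, folded j_def]
  note l' = partner_props[OF l]
  have "B (M (e l) - Jc (e l)) (e j) =
      (1 / \<beta>) * (A (e l) (e j) - \<alpha> * B (e l) (e j))
      - jsign (upper l) (parity l) * B (e (partner l)) (e j)"
    by (simp add: bilinear_lsub[OF bilB] B_M Jc_basis l bilinear_lmul[OF bilB])
  moreover have "B (M (e l) - Jc (e l)) (e j) \<noteq> 0"
    using ne unfolding coord_def j_def by auto
  ultimately have "start l = start j" and
    "(1 / \<beta>) * (jblock_A_local \<alpha> \<beta> (upper l) (pair l) (parity l) (upper j) (pair j) (parity j)
        - \<alpha> * jblock_B_local (upper l) (pair l) (parity l) (upper j) (pair j) (parity j))
      - jsign (upper l) (parity l)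
        * jblock_B_local (upper l) (pair l) (1 - parity l) (upper j) (pair j) (parity j) \<noteq> 0"
    using A_basis[OF l j(1)] B_basis[OF l j(1)] B_basis[OF l'(1) j(1)] l' by (auto split: if_splits)
  moreover have "bsize j = bsize l"
    using bsize_eq_if_start_eq[OF l j(1)] \<open>start l = start j\<close> by simp
  ultimately have "depth (bsize l) (\<not> upper j) (pair j) < depth (bsize l) (upper l) (pair l)"
    using depth_decreasing[OF index_decode(2)[OF l] _ index_decode(3)[OF l]
        index_decode(3)[OF j(1)] beta] index_decode(2)[OF j(1)]
    by simp
  then show ?thesis
    unfolding level_def using j \<open>bsize j = bsize l\<close> by simp
qed

lemma nilpotent_M_minus_Jc: "nilpotent_op (\<lambda>x. M x - Jc x)"
  unfolding nilpotent_op_def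
proof
  show "\<forall>x. ((\<lambda>x. M x - Jc x) ^^ dimV) x = 0"
  proof (intro allI nilpotent_if_level_decreasing)
    show "linear (\<lambda>x. M x - Jc x)"
      by (rule linear_compose_sub[OF linear_M linear_Jc])
    show "level i < dimV" if "i \<in> {..<dimV}" for i
      using that index_decode(2)[of i] block_start_bounds[of i ks]
      unfolding level_def depth_def bsize_def by auto
    show "M (e l) - Jc (e l) \<in> span (e ` {i \<in> {..<dimV}. level i < level l})"
      if "l \<in> {..<dimV}" for l
    proof -
      have "coord i (M (e l) - Jc (e l)) *\<^sub>R e i \<in> span (e ` {i \<in> {..<dimV}. level i < level l})"
        if i: "i < dimV" for i
      proof (cases "coord i (M (e l) - Jc (e l)) = 0")
        case False
        with coord_M_minus_Jc_level[OF i] \<open>l \<in> {..<dimV}\<close> have "level i < level l"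
          by simp
        with i show ?thesis
          by (intro span_scale span_base) simp
      qed (simp add: span_zero)
      then show ?thesis
        by (subst basis_expansion) (auto intro: span_sum)
    qed
  qed (use span in simp)
qed

lemma form_basis_eq_0_same_half:
  assumes "i < dimV" "j < dimV" "upper i = upper j"
  shows "A (e i) (e j) = 0" "B (e i) (e j) = 0"
  using assms by (simp_all add: A_basis B_basis jblock_local_eq_0_same_half)

definition half_scale :: "real \<Rightarrow> real \<Rightarrow> 'v \<Rightarrow> 'v" where
  "half_scale a b = basis_map (\<lambda>i. (if upper i then b else a) *\<^sub>R e i)"

lemma linear_half_scale: "linear (half_scale a b)"
  unfolding half_scale_def by (rule linear_basis_map)

lemma half_scale_basis: "i < dimV \<Longrightarrow> half_scale a b (e i) = (if upper i then b else a) *\<^sub>R e i"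
  unfolding half_scale_def by (rule basis_map_basis)

lemma half_scale_half_scale: "half_scale a b (half_scale c d x) = half_scale (a * c) (b * d) x"
proof (rule linear_eq_on_basis[of "\<lambda>x. half_scale a b (half_scale c d x)"])
  show "linear (\<lambda>x. half_scale a b (half_scale c d x))"
    using linear_compose[OF linear_half_scale linear_half_scale] by (simp add: o_def)
qed (simp_all add: linear_half_scale half_scale_basis linear_scale[OF linear_half_scale])

lemma half_scale_1_1: "half_scale 1 1 x = x"
  by (rule linear_eq_on_basis[OF linear_half_scale linear_ident]) (simp add: half_scale_basis)

lemma half_scale_combination:
  "c *\<^sub>R half_scale a b x + d *\<^sub>R x = half_scale (c * a + d) (c * b + d) x"
proof (rule linear_eq_on_basis[of "\<lambda>x. c *\<^sub>R half_scale a b x + d *\<^sub>R x"])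
  show "linear (\<lambda>x. c *\<^sub>R half_scale a b x + d *\<^sub>R x)"
    by (intro linear_compose_add linear_compose_scale_right linear_half_scale linear_ident)
qed (simp_all add: linear_half_scale half_scale_basis scaleR_add_left)

lemma form_half_scale:
  assumes F: "bilinear F"
    and same_half: "\<And>i j. i < dimV \<Longrightarrow> j < dimV \<Longrightarrow> upper i = upper j \<Longrightarrow> F (e i) (e j) = 0"
  shows "F (half_scale a b x) (half_scale a b y) = (a * b) * F x y"
proof -
  have "F (half_scale a b x) (half_scale a b y) = F ((a * b) *\<^sub>R x) y"
  proof (rule bilinear_eq_on_basis[of "\<lambda>x y. F (half_scale a b x) (half_scale a b y)"
        "\<lambda>x y. F ((a * b) *\<^sub>R x) y"])
    show "bilinear (\<lambda>x y. F (half_scale a b x) (half_scale a b y))"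
      by (rule bilinear_compose[OF F linear_half_scale linear_half_scale])
    show "bilinear (\<lambda>x y. F ((a * b) *\<^sub>R x) y)"
      by (rule bilinear_compose[OF F linear_compose_scale_right[OF linear_ident] linear_ident])
    fix i j assume "i < dimV" "j < dimV"
    then show "F (half_scale a b (e i)) (half_scale a b (e j)) = F ((a * b) *\<^sub>R e i) (e j)"
      using same_half[of i j] by (cases "upper i"; cases "upper j")
        (simp_all add: half_scale_basis bilinear_lmul[OF F] bilinear_rmul[OF F])
  qed
  then show ?thesis
    by (simp add: bilinear_lmul[OF F])
qed

lemma half_scale_aut:
  assumes "a \<noteq> 0"
  shows "half_scale a (1 / a) \<in> aut_real A B"
proof -
  have "half_scale (1 / a) a \<circ> half_scale a (1 / a) = id"
    "half_scale a (1 / a) \<circ> half_scale (1 / a) a = id"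
    using assms by (simp_all add: fun_eq_iff half_scale_half_scale half_scale_1_1)
  then have "bij (half_scale a (1 / a))"
    by (rule o_bij)
  with assms show ?thesis
    by (simp add: aut_real_def linear_half_scale form_half_scale[OF bilA] form_half_scale[OF bilB]
        form_basis_eq_0_same_half)
qed

lemma Jc_half_scale: "Jc (half_scale a b x) = half_scale a b (Jc x)"
proof (rule linear_eq_on_basis[of "\<lambda>x. Jc (half_scale a b x)" "\<lambda>x. half_scale a b (Jc x)"])
  show "linear (\<lambda>x. Jc (half_scale a b x))" "linear (\<lambda>x. half_scale a b (Jc x))"
    using linear_compose[OF linear_half_scale linear_Jc]
      linear_compose[OF linear_Jc linear_half_scale]
    by (simp_all add: o_def)
qed (simp add: Jc_basis half_scale_basis partner_props linear_scale[OF linear_Jc]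
    linear_scale[OF linear_half_scale])

text \<open>\<open>Jc\<close> reverses the signs of \<open>A\<close> and \<open>B\<close>, and so does \<open>half_scale 1 (-1)\<close>; their composition
  is an automorphism, and \<open>half_scale 1 (-1)\<close> is an affine combination of the identity and
  the automorphism \<open>half_scale 2 (1/2)\<close>.\<close>

definition "Jc_flip x = Jc (half_scale 1 (-1) x)"

lemma Jc_flip_aut: "Jc_flip \<in> aut_real A B"
proof -
  have linear: "linear Jc_flip"
    using linear_compose[OF linear_half_scale linear_Jc] by (simp add: Jc_flip_def[abs_def] o_def)
  have Jc_flip_Jc_flip: "Jc_flip (Jc_flip x) = - x" for x
    by (simp add: Jc_flip_def Jc_half_scale Jc_Jc half_scale_half_scale half_scale_1_1
        linear_neg[OF linear_half_scale])
  then have "(\<lambda>x. - Jc_flip x) \<circ> Jc_flip = id" "Jc_flip \<circ> (\<lambda>x. - Jc_flip x) = id"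
    by (simp_all add: fun_eq_iff linear_neg[OF linear])
  then have "bij Jc_flip"
    by (rule o_bij)
  moreover have "F (Jc_flip x) (Jc_flip y) = F x y"
    if "F = A \<or> F = B" for F x y
  proof -
    have "F (Jc_flip x) (Jc_flip y) = - F (half_scale 1 (-1) x) (half_scale 1 (-1) y)"
      using that Jc_Jc A_Jc_adjoint B_Jc_adjoint bilinear_rneg[OF bilA] bilinear_rneg[OF bilB]
      by (auto simp: Jc_flip_def)
    then show ?thesis
      using that form_half_scale[OF bilA] form_half_scale[OF bilB] form_basis_eq_0_same_half
      by auto
  qed
  ultimately show ?thesis
    using linear by (simp add: aut_real_def)
qed

lemma Jc_eq_Jc_flip_half_scale:
  "Jc u = Jc_flip ((4 / 3) *\<^sub>R half_scale 2 (1 / 2) u - (5 / 3) *\<^sub>R u)"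
proof -
  have "(4 / 3) *\<^sub>R half_scale 2 (1 / 2) u - (5 / 3) *\<^sub>R u = half_scale 1 (-1) u"
    using half_scale_combination[of "4 / 3" 2 "1 / 2" u "- 5 / 3"] by simp
  then show ?thesis
    by (simp add: Jc_flip_def half_scale_half_scale half_scale_1_1)
qed

lemma Jc_image_invariant_subspace:
  assumes "subspace U" "invariant_under (aut_real A B) U"
  shows "Jc ` U \<subseteq> U"
proof
  fix x assume "x \<in> Jc ` U"
  then obtain u where "u \<in> U" and x: "x = Jc u"
    by blast
  have "half_scale 2 (1 / 2) u \<in> U"
    using assms(2) half_scale_aut[of 2] \<open>u \<in> U\<close> by (auto simp: invariant_under_def)
  then have "(4 / 3) *\<^sub>R half_scale 2 (1 / 2) u - (5 / 3) *\<^sub>R u \<in> U"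
    using assms(1) \<open>u \<in> U\<close> by (intro subspace_diff subspace_scale)
  then show "x \<in> U"
    using assms(2) Jc_flip_aut unfolding x Jc_eq_Jc_flip_half_scale invariant_under_def by blast
qed

end

lemma real_jordan_blocks_complex_structure:
  fixes A B :: "'v::euclidean_space \<Rightarrow> 'v \<Rightarrow> real" and P :: "'v \<Rightarrow> 'v"
  assumes bilA: "bilinear A" and bilB: "bilinear B"
    and nondegB: "\<forall>u. (\<forall>v. B u v = 0) \<longrightarrow> u = 0"
    and beta: "\<beta> \<noteq> 0"
    and blocks: "only_real_jordan_blocks A B \<alpha> \<beta>"
    and P: "linear P" "\<forall>u v. A u v = B (P u) v"
  obtains J0 where "linear J0" "\<And>x. J0 (J0 x) = - x"
    "\<And>x. J0 ((1 / \<beta>) *\<^sub>R (P x - \<alpha> *\<^sub>R x)) = (1 / \<beta>) *\<^sub>R (P (J0 x) - \<alpha> *\<^sub>R J0 x)"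
    "nilpotent_op (\<lambda>x. (1 / \<beta>) *\<^sub>R (P x - \<alpha> *\<^sub>R x) - J0 x)"
    "\<And>U. subspace U \<Longrightarrow> invariant_under (aut_real A B) U \<Longrightarrow> J0 ` U \<subseteq> U"
proof -
  from blocks obtain ks and e :: "nat \<Rightarrow> 'v" where kpos: "\<forall>k\<in>set ks. 0 < k"
    and inj: "inj_on e {..<4 * sum_list ks}" and span: "span (e ` {..<4 * sum_list ks}) = UNIV"
    and gram: "\<forall>i<4 * sum_list ks. \<forall>j<4 * sum_list ks.
      A (e i) (e j) = blockdiag (jblock_A \<alpha> \<beta>) ks i j \<and> B (e i) (e j) = blockdiag jblock_B ks i j"
    unfolding only_real_jordan_blocks_def Let_def by blast
  interpret real_jordan_basis A B P \<alpha> \<beta> ks e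
    by (rule real_jordan_basis.intro[OF bilA bilB nondegB beta P kpos inj span gram])
  from that linear_Jc Jc_Jc Jc_M_commute nilpotent_M_minus_Jc Jc_image_invariant_subspace
  show ?thesis
    unfolding M_def by blast
qed

theorem theorem9:
  fixes A B :: "'v::euclidean_space \<Rightarrow> 'v \<Rightarrow> real"
    and P J :: "'v \<Rightarrow> 'v"
    and \<alpha> \<beta> :: real
  assumes bilA: "bilinear A" and bilB: "bilinear B"
    and skewA: "\<forall>u v. A u v = - A v u"
    and skewB: "\<forall>u v. B u v = - B v u"
    and nondegB: "\<forall>u. (\<forall>v. B u v = 0) \<longrightarrow> u = 0"
    and beta: "\<beta> \<noteq> 0"
    and blocks: "only_real_jordan_blocks A B \<alpha> \<beta>"
    and P: "linear P" "\<forall>u v. A u v = B (P u) v"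
    and J: "is_semisimple_part J (\<lambda>x. (1 / \<beta>) *\<^sub>R (P x - \<alpha> *\<^sub>R x))"
  shows "(\<forall>Q\<in>aut_real A B. Q \<circ> J = J \<circ> Q)
       \<and> aut_real A B = aut_complex J A B
       \<and> (\<forall>U. subspace U \<longrightarrow>
             (invariant_under (aut_real A B) U \<longleftrightarrow>
                (J ` U \<subseteq> U \<and> invariant_under (aut_complex J A B) U)))"
proof -
  define M where "M x = (1 / \<beta>) *\<^sub>R (P x - \<alpha> *\<^sub>R x)" for x
  have M_app: "(1 / \<beta>) *\<^sub>R (P x - \<alpha> *\<^sub>R x) = M x" for x
    by (simp add: M_def)
  obtain J0 where J0: "linear J0" "\<And>x. J0 (J0 x) = - x" "\<And>x. J0 (M x) = M (J0 x)"
    "nilpotent_op (\<lambda>x. M x - J0 x)"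
    and J0_invariant: "\<And>U. subspace U \<Longrightarrow> invariant_under (aut_real A B) U \<Longrightarrow> J0 ` U \<subseteq> U"
    using real_jordan_blocks_complex_structure[OF bilA bilB nondegB beta blocks P, unfolded M_app]
    by blast
  note J = J[unfolded M_app]
  have commute: "\<forall>Q\<in>aut_real A B. Q \<circ> J = J \<circ> Q"
  proof
    fix Q assume "Q \<in> aut_real A B"
    with aut_real_commute_P[OF bilB nondegB P(2)] have "linear Q" "Q \<circ> M = M \<circ> Q"
      by (auto simp: aut_real_def M_def fun_eq_iff linear_diff linear_scale)
    then show "Q \<circ> J = J \<circ> Q"
      by (rule semisimple_part_eq_complex_structure(2)[OF J J0])
  qed
  have aut_eq: "aut_real A B = aut_complex J A B"
    using aut_complex_subset_aut_real aut_real_subset_aut_complex[OF commute] by blast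
  show ?thesis
    unfolding aut_eq[symmetric]
    using commute J0_invariant semisimple_part_eq_complex_structure(1)[OF J J0] by blast
qed

end
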